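(* Let $q\ge 4$. Every twisted cubic of $\mathrm{PG}(U_1)$ that is contained in $\mathcal O_1$ is of the form $\theta(L)$ for some $q$-order subline $L$ of $\mathrm{PG}(1,q^3)$.
   Context: $q$ is a prime power. Let $U_1\subset\mathbb F_{q^3}^8$ be the set of vectors $(a,b^{q^2},b^{q},c,b,c^{q},c^{q^2},d)$ with $a,d\in\mathbb F_q$, $b,c\in\mathbb F_{q^3}$; it is an $8$-dimensional $\mathbb F_q$-vector space, so $\mathrm{PG}(U_1)\cong\mathrm{PG}(7,q)$. For $(a,b,c,d)\ne 0$ let $P(a,b,c,d)$ be the point of $\mathrm{PG}(U_1)$ spanned by this vector. Let $\mathcal O_1=\{P(1,t,t^{q^2+q},t^{q^2+q+1}) : t\in\mathbb F_{q^3}\}\cup\{P(0,0,0,1)\}$. Let $\theta:\mathrm{PG}(1,q^3)\to\mathcal O_1$ be the bijection $\langle(1,t)\rangle\mapsto P(1,t,t^{q^2+q},t^{q^2+q+1})$, $\langle(0,1)\rangle\mapsto P(0,0,0,1)$. A $q$-order subline of $\mathrm{PG}(1,q^3)$ is the image of $\mathrm{PG}(1,q)=\{\langle(1,t)\rangle:t\in\mathbb F_q\}\cup\{\langle(0,1)\rangle\}$ under an element of $\mathrm{PGL}(2,q^3)$. *)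

theory Defs
  imports "HOL-Computational_Algebra.Primes"
begin

text \<open>The field F_{q^3} is a finite field type 'a with CARD('a) = q^3; the subfield
 F_q is the fixed field of the q-Frobenius.  Vectors of F_{q^3}^8 are represented as
 functions nat => 'a, with coordinates 0..7 (and 0 elsewhere).\<close>

definition Fq :: "nat \<Rightarrow> ('a::field) set" where
  "Fq q = {x. x ^ q = x}"

definition vecU :: "nat \<Rightarrow> 'a::field \<Rightarrow> 'a \<Rightarrow> 'a \<Rightarrow> 'a \<Rightarrow> nat \<Rightarrow> 'a" where
  "vecU q a b c d = (\<lambda>i. if i < 8
      then [a, b ^ (q^2), b ^ q, c, b, c ^ q, c ^ (q^2), d] ! i else 0)"

definition U1 :: "nat \<Rightarrow> (nat \<Rightarrow> 'a::field) set" where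
  "U1 q = {vecU q a b c d | a b c d. a \<in> Fq q \<and> d \<in> Fq q}"

definition pt :: "nat \<Rightarrow> (nat \<Rightarrow> 'a::field) \<Rightarrow> (nat \<Rightarrow> 'a) set" where
  "pt q v = {(\<lambda>i. l * v i) | l. l \<in> Fq q}"

definition PG_U1 :: "nat \<Rightarrow> (nat \<Rightarrow> 'a::field) set set" where
  "PG_U1 q = {pt q v | v. v \<in> U1 q \<and> v \<noteq> (\<lambda>i. 0)}"

definition Ppt :: "nat \<Rightarrow> 'a::field \<Rightarrow> 'a \<Rightarrow> 'a \<Rightarrow> 'a \<Rightarrow> (nat \<Rightarrow> 'a) set" where
  "Ppt q a b c d = pt q (vecU q a b c d)"

definition O1 :: "nat \<Rightarrow> (nat \<Rightarrow> 'a::field) set set" where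
  "O1 q = {Ppt q 1 t (t ^ (q^2 + q)) (t ^ (q^2 + q + 1)) | t. True} \<union> {Ppt q 0 0 0 1}"

definition twisted_cubic :: "nat \<Rightarrow> (nat \<Rightarrow> 'a::field) set set \<Rightarrow> bool" where
  "twisted_cubic q C \<longleftrightarrow> (\<exists>e0 e1 e2 e3.
      e0 \<in> U1 q \<and> e1 \<in> U1 q \<and> e2 \<in> U1 q \<and> e3 \<in> U1 q \<and>
      (\<forall>c0 c1 c2 c3. c0 \<in> Fq q \<and> c1 \<in> Fq q \<and> c2 \<in> Fq q \<and> c3 \<in> Fq q \<and>
          (\<forall>i. c0 * e0 i + c1 * e1 i + c2 * e2 i + c3 * e3 i = 0)
          \<longrightarrow> c0 = 0 \<and> c1 = 0 \<and> c2 = 0 \<and> c3 = 0) \<and>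
      C = {pt q (\<lambda>i. s^3 * e0 i + s^2 * t * e1 i + s * t^2 * e2 i + t^3 * e3 i) | s t.
             s \<in> Fq q \<and> t \<in> Fq q \<and> (s, t) \<noteq> (0, 0)})"

definition pt1 :: "'a::field \<times> 'a \<Rightarrow> ('a \<times> 'a) set" where
  "pt1 v = {(m * fst v, m * snd v) | m. True}"

definition PG1_q :: "nat \<Rightarrow> ('a::field \<times> 'a) set set" where
  "PG1_q q = {pt1 (1, t) | t. t \<in> Fq q} \<union> {pt1 (0, 1)}"

definition subline :: "nat \<Rightarrow> ('a::field \<times> 'a) set set \<Rightarrow> bool" where
  "subline q L \<longleftrightarrow> (\<exists>al be ga de. al * de - be * ga \<noteq> 0 \<and>
      L = {pt1 (al * x + be * y, ga * x + de * y) | x y.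
             pt1 (x, y) \<in> PG1_q q \<and> (x, y) \<noteq> (0, 0)})"

definition theta :: "nat \<Rightarrow> ('a::field \<times> 'a) set \<Rightarrow> (nat \<Rightarrow> 'a) set" where
  "theta q X = (if X = pt1 (0, 1) then Ppt q 0 0 0 1
      else (let t = (THE t. X = pt1 (1, t)) in
            Ppt q 1 t (t ^ (q^2 + q)) (t ^ (q^2 + q + 1))))"

end

theory Submission
  imports Defs "HOL-Number_Theory.Residues" "HOL-Computational_Algebra.Polynomial"
begin

text \<open>Let \<sigma> be the q-Frobenius of F_(q^3). The point of O_1 attached to \<langle>z\<rangle> in PG(1, q^3)
  is spanned by the tensor z \<otimes> z^\<sigma> \<otimes> z^(\<sigma>^2), so for all u, v, w the map
  z \<mapsto> det(u, z) det(v, z)^\<sigma> det(w, z)^(\<sigma>^2) is the restriction of a linear form. A twisted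
  cubic contained in O_1 lifts to q + 1 points z_i of PG(1, q^3), and any five of the
  corresponding vectors are linearly dependent. Choosing u, v, w among three of those five
  points kills three terms of the dependency; the remaining two terms force the cross ratio of the
  other four points to be fixed by \<sigma>, i.e. to lie in F_q. Hence all z_i lie on the subline
  through z_1, z_2, z_3, and since this subline also has q + 1 points, \<theta> maps it onto the cubic.\<close>

section \<open>Finite fields\<close>

text \<open>\<open>finite_field_power_card_eq_same\<close> is stated for the sort \<open>finite_field\<close>, which a type
  of sort \<open>{field, finite}\<close> does not syntactically have.\<close>
lemma power_card_eq_self:
  fixes x :: "'a::{field,finite}"
  shows "x ^ card (UNIV :: 'a set) = x"
proof (cases "x = 0")
  case False
  let ?U = "UNIV - {0 :: 'a}"
  have "(\<Prod>y\<in>?U. x * y) = \<Prod>?U"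
    by (rule prod.reindex_bij_witness[of _ "\<lambda>y. y / x" "\<lambda>y. x * y"]) (use False in auto)
  then have "x ^ card ?U * \<Prod>?U = 1 * \<Prod>?U"
    by (simp add: prod.distrib)
  then have "x ^ card ?U = 1"
    by (subst (asm) mult_cancel_right) simp
  have "card (UNIV :: 'a set) = Suc (card ?U)"
    using finite_UNIV_card_ge_0[where 'a = 'a] by (simp add: card_Diff_singleton)
  then have "x ^ card (UNIV :: 'a set) = x * x ^ card ?U"
    by (simp only: power_Suc)
  with \<open>x ^ card ?U = 1\<close> show ?thesis
    by simp
qed (use finite_UNIV_card_ge_0[where 'a = 'a] in simp)

lemma CHAR_eq_of_card_prime_power:
  fixes p :: nat
  assumes "prime p" and "card (UNIV :: 'a::{idom,finite} set) = p ^ n"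
  shows "CHAR('a) = p"
proof -
  have "prime CHAR('a)"
    by (simp add: finite_imp_CHAR_pos prime_CHAR_semidom)
  moreover have "CHAR('a) dvd p ^ n"
    using CHAR_dvd_CARD[where 'a = 'a] assms(2) by simp
  ultimately show ?thesis
    using assms(1) by (metis prime_dvd_power primes_dvd_imp_eq)
qed

lemma card_roots_of_power_le:
  assumes "0 < m"
  shows "card {x :: 'a::idom. x ^ m = c} \<le> m"
proof -
  define p :: "'a poly" where "p = monom 1 m + [:- c:]"
  have deg: "degree p = m"
    using assms by (simp add: p_def degree_add_eq_left degree_monom_eq)
  have "{x. x ^ m = c} = {x. poly p x = 0}"
    by (auto simp: p_def poly_monom)
  moreover have "p \<noteq> 0"
    using deg assms by auto
  ultimately show ?thesis
    using card_poly_roots_bound deg by metis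
qed

lemma Fq_1 [simp]: "(1 :: 'a::field) \<in> Fq q"
  by (simp add: Fq_def)

lemma Fq_mult: "x \<in> Fq q \<Longrightarrow> y \<in> Fq q \<Longrightarrow> (x * y :: 'a::field) \<in> Fq q"
  by (simp add: Fq_def power_mult_distrib)

lemma Fq_divide: "x \<in> Fq q \<Longrightarrow> y \<in> Fq q \<Longrightarrow> (x / y :: 'a::field) \<in> Fq q"
  by (simp add: Fq_def power_divide)

lemma Fq_power: "x \<in> Fq q \<Longrightarrow> (x :: 'a::field) ^ n \<in> Fq q"
  by (simp add: Fq_def flip: power_mult) (metis mult.commute power_mult)

lemma card_gt_3_avoid:
  assumes "3 < card A"
  obtains u where "u \<in> A" "u \<noteq> a" "u \<noteq> b" "u \<noteq> c"
proof -
  have "card {a, b, c} \<le> 3"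
    by (simp add: card_insert_if)
  with assms have "\<not> A \<subseteq> {a, b, c}"
    using card_mono[of "{a, b, c}" A] by fastforce
  with that show thesis
    by blast
qed

text \<open>The norm \<open>x \<mapsto> x ^ (q\<^sup>2 + q + 1)\<close> maps into \<open>Fq q\<close>, and its fibres have at most
  \<open>q\<^sup>2 + q + 1\<close> elements.\<close>
lemma card_Fq_ge:
  assumes "card (UNIV :: 'a::{field,finite} set) = q ^ 3"
  shows "q \<le> card (Fq q :: 'a set)"
proof -
  define m where "m = q^2 + q + 1"
  have norm_in_Fq: "x ^ m \<in> Fq q" for x :: 'a
  proof -
    have "m * q = q ^ 3 + (q ^ 2 + q)"
      by (simp add: m_def power2_eq_square power3_eq_cube algebra_simps)
    then have "(x ^ m) ^ q = x ^ (q ^ 3) * x ^ (q ^ 2 + q)"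
      by (simp only: power_mult [symmetric] power_add [symmetric])
    also have "x ^ (q ^ 3) = x"
      using power_card_eq_self[of x] assms by simp
    finally show ?thesis
      by (simp add: Fq_def m_def power_add mult_ac)
  qed
  have "UNIV = (\<Union>c\<in>Fq q. {x :: 'a. x ^ m = c})"
    using norm_in_Fq by blast
  then have "q ^ 3 \<le> (\<Sum>c\<in>Fq q. card {x :: 'a. x ^ m = c})"
    using card_UN_le[of "Fq q" "\<lambda>c. {x :: 'a. x ^ m = c}"] assms by simp
  also have "\<dots> \<le> card (Fq q :: 'a set) * m"
  proof -
    have "card {x :: 'a. x ^ m = c} \<le> m" for c
      using card_roots_of_power_le[of m] by (simp add: m_def)
    then show ?thesis
      using sum_bounded_above[of "Fq q" "\<lambda>c. card {x :: 'a. x ^ m = c}" m] by simp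
  qed
  finally have bound: "q ^ 3 \<le> card (Fq q :: 'a set) * m" .
  have "q * m = q ^ 3 + q ^ 2 + q"
    by (simp add: m_def power2_eq_square power3_eq_cube algebra_simps)
  show ?thesis
  proof (rule ccontr)
    assume "\<not> q \<le> card (Fq q :: 'a set)"
    then have "card (Fq q :: 'a set) * m + m \<le> q * m"
      using mult_le_mono1[of "card (Fq q :: 'a set) + 1" q m] by simp
    then show False
      using bound \<open>q * m = _\<close> by (simp add: m_def)
  qed
qed

section \<open>Points of PG(1, q^3), sublines and cross ratios\<close>

lemma pt_self: "v \<in> pt q (v :: nat \<Rightarrow> 'a::field)"
  unfolding pt_def by (rule CollectI, rule exI[of _ 1]) simp

lemma pt_eqD: "pt q v = pt q w \<Longrightarrow> \<exists>l\<in>Fq q. v = (\<lambda>i. l * (w i :: 'a::field))"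
  using pt_self[of v q] unfolding pt_def by auto

lemma pt_scale:
  fixes v :: "nat \<Rightarrow> 'a::field"
  assumes "l \<in> Fq q" and "l \<noteq> 0"
  shows "pt q (\<lambda>i. l * v i) = pt q v"
proof (intro equalityI subsetI)
  fix x assume "x \<in> pt q (\<lambda>i. l * v i)"
  then obtain m where "m \<in> Fq q" "x = (\<lambda>i. (m * l) * v i)"
    by (auto simp: pt_def mult.assoc)
  with assms show "x \<in> pt q v"
    unfolding pt_def by (blast intro: Fq_mult)
next
  fix x assume "x \<in> pt q v"
  then obtain m where "m \<in> Fq q" "x = (\<lambda>i. (m / l) * (l * v i))"
    using assms by (auto simp: pt_def)
  with assms show "x \<in> pt q (\<lambda>i. l * v i)"
    unfolding pt_def by (blast intro: Fq_divide)
qed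

lemma pt1_self: "v \<in> pt1 v"
  unfolding pt1_def by (rule CollectI, rule exI[of _ 1]) simp

lemma pt1_scale:
  fixes m :: "'a::field"
  assumes "m \<noteq> 0"
  shows "pt1 (m * x, m * y) = pt1 (x, y)"
proof (intro equalityI subsetI)
  fix v assume "v \<in> pt1 (m * x, m * y)"
  then obtain n where "v = ((n * m) * x, (n * m) * y)"
    by (auto simp: pt1_def mult.assoc)
  then show "v \<in> pt1 (x, y)"
    unfolding pt1_def by auto
next
  fix v assume "v \<in> pt1 (x, y)"
  then obtain n where "v = ((n / m) * (m * x), (n / m) * (m * y))"
    using assms by (auto simp: pt1_def)
  then show "v \<in> pt1 (m * x, m * y)"
    unfolding pt1_def by (simp only: fst_conv snd_conv) blast
qed

lemma pt1_mem_iff: "v \<in> pt1 w \<longleftrightarrow> (\<exists>m. v = (m * fst w, m * snd w))"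
  by (auto simp: pt1_def)

lemma pt1_1_ne_pt1_01: "pt1 (1, u) \<noteq> pt1 (0 :: 'a::field, 1)"
proof
  assume "pt1 (1, u) = pt1 (0 :: 'a, 1)"
  then have "(1, u) \<in> pt1 (0 :: 'a, 1)"
    using pt1_self by metis
  then show False
    by (auto simp: pt1_def)
qed

lemma theta_pt1_01: "theta q (pt1 (0, 1)) = Ppt q 0 0 0 1"
  by (simp add: theta_def)

lemma theta_pt1_1: "theta q (pt1 (1, u)) = Ppt q 1 u (u ^ (q^2 + q)) (u ^ (q^2 + q + 1))"
proof -
  have "(THE t. pt1 (1, u) = pt1 (1, t)) = u"
  proof (rule the_equality)
    fix t assume "pt1 (1, u) = pt1 (1, t)"
    then show "t = u"
      using pt1_self[of "(1, u)"] by (auto simp: pt1_def)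
  qed simp
  then show ?thesis
    by (simp add: theta_def pt1_1_ne_pt1_01)
qed

lemma pair_normalize:
  assumes "z \<noteq> (0, 0 :: 'a::field)"
  obtains m w where "m \<noteq> 0" "w = (0, 1) \<or> fst w = 1" "z = (m * fst w, m * snd w)"
proof (cases "fst z = 0")
  case True
  with assms show thesis
    by (intro that[of "snd z" "(0, 1)"]) (auto simp: prod_eq_iff)
next
  case False
  then show thesis
    by (intro that[of "fst z" "(1, snd z / fst z)"]) (auto simp: prod_eq_iff)
qed

lemma pt1_in_PG1_q:
  assumes "x \<in> Fq q" "y \<in> Fq q" "(x, y) \<noteq> (0, 0 :: 'a::field)"
  shows "pt1 (x, y) \<in> PG1_q q"
proof (cases "x = 0")
  case True
  with assms have "pt1 (x, y) = pt1 (0, 1)"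
    using pt1_scale[of y 0 1] by simp
  then show ?thesis
    by (simp add: PG1_q_def)
next
  case False
  then have "pt1 (x, y) = pt1 (1, y / x)"
    using pt1_scale[of x 1 "y / x"] by simp
  with assms show ?thesis
    unfolding PG1_q_def by (blast intro: Fq_divide)
qed

definition PG1_reps :: "nat \<Rightarrow> ('a::field \<times> 'a) set" where
  "PG1_reps q = insert (0, 1) ((\<lambda>t. (1, t)) ` Fq q)"

lemma finite_PG1_reps: "finite (Fq q :: 'a::field set) \<Longrightarrow> finite (PG1_reps q :: ('a \<times> 'a) set)"
  by (simp add: PG1_reps_def)

definition subline_image :: "nat \<Rightarrow> 'a \<Rightarrow> 'a \<Rightarrow> 'a \<Rightarrow> 'a \<Rightarrow> ('a::field \<times> 'a) set set" where
  "subline_image q al be ga de = {pt1 (al * x + be * y, ga * x + de * y) | x y.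
      pt1 (x, y) \<in> PG1_q q \<and> (x, y) \<noteq> (0, 0)}"

lemma subline_iff_image:
  "subline q L \<longleftrightarrow> (\<exists>al be ga de. al * de - be * ga \<noteq> 0 \<and> L = subline_image q al be ga de)"
  by (simp add: subline_def subline_image_def)

lemma subline_image_eq:
  "subline_image q al be ga de = (\<lambda>(x, y). pt1 (al * x + be * y, ga * x + de * y)) ` PG1_reps q"
proof (intro equalityI subsetI)
  fix X assume "X \<in> subline_image q al be ga de"
  then obtain x y where X: "X = pt1 (al * x + be * y, ga * x + de * y)"
    and xy: "pt1 (x, y) \<in> PG1_q q" "(x, y) \<noteq> (0, 0)"
    unfolding subline_image_def by blast
  from xy(1) obtain v where v: "v \<in> PG1_reps q" "pt1 (x, y) = pt1 v"
    by (auto simp: PG1_q_def PG1_reps_def)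
  then obtain m where "x = m * fst v" "y = m * snd v"
    using pt1_self[of "(x, y)"] by (auto simp: pt1_mem_iff)
  moreover from this have "m \<noteq> 0"
    using xy(2) by auto
  ultimately have "X = pt1 (m * (al * fst v + be * snd v), m * (ga * fst v + de * snd v))"
    by (simp add: X algebra_simps)
  then have "X = pt1 (al * fst v + be * snd v, ga * fst v + de * snd v)"
    using pt1_scale \<open>m \<noteq> 0\<close> by simp
  with v show "X \<in> (\<lambda>(x, y). pt1 (al * x + be * y, ga * x + de * y)) ` PG1_reps q"
    by (auto simp: case_prod_beta)
next
  fix X assume "X \<in> (\<lambda>(x, y). pt1 (al * x + be * y, ga * x + de * y)) ` PG1_reps q"
  then obtain v where v: "v \<in> PG1_reps q"
    and X: "X = pt1 (al * fst v + be * snd v, ga * fst v + de * snd v)"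
    by (auto simp: case_prod_beta)
  from v have "pt1 (fst v, snd v) \<in> PG1_q q" "(fst v, snd v) \<noteq> (0, 0)"
    by (auto simp: PG1_q_def PG1_reps_def)
  then show "X \<in> subline_image q al be ga de"
    unfolding subline_image_def X by blast
qed

definition det2 :: "'a::comm_ring \<times> 'a \<Rightarrow> 'a \<times> 'a \<Rightarrow> 'a" where
  "det2 z w = fst z * snd w - snd z * fst w"

lemma det2_self [simp]: "det2 z z = 0"
  by (simp add: det2_def mult.commute)

lemma det2_swap: "det2 w z = - det2 z w"
  by (simp add: det2_def algebra_simps)

lemma det2_eq_0_imp_scalar:
  assumes "det2 z w = 0" and "w \<noteq> (0, 0 :: 'a::field)"
  obtains m where "z = (m * fst w, m * snd w)"
proof (cases "fst w = 0")
  case True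
  with assms show thesis
    by (intro that[of "snd z / snd w"]) (auto simp: det2_def prod_eq_iff)
next
  case False
  with assms show thesis
    by (intro that[of "fst z / fst w"]) (auto simp: det2_def prod_eq_iff field_simps)
qed

lemma pair_Cramer:
  assumes "det2 z1 z2 \<noteq> (0 :: 'a::field)"
  shows "z = (det2 z z2 / det2 z1 z2 * fst z1 + det2 z1 z / det2 z1 z2 * fst z2,
              det2 z z2 / det2 z1 z2 * snd z1 + det2 z1 z / det2 z1 z2 * snd z2)"
proof -
  have "det2 z z2 * fst z1 + det2 z1 z * fst z2 = fst z * det2 z1 z2"
    "det2 z z2 * snd z1 + det2 z1 z * snd z2 = snd z * det2 z1 z2"
    by (simp_all add: det2_def algebra_simps)
  with assms show ?thesis
    by (simp add: prod_eq_iff add_divide_distrib[symmetric])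
qed

definition cross_ratio :: "'a::field \<times> 'a \<Rightarrow> 'a \<times> 'a \<Rightarrow> 'a \<times> 'a \<Rightarrow> 'a \<times> 'a \<Rightarrow> 'a" where
  "cross_ratio z1 z2 z3 z4 = (det2 z1 z3 * det2 z2 z4) / (det2 z2 z3 * det2 z1 z4)"

text \<open>\<open>(c1, c2)\<close> are the coordinates of \<open>z3\<close> in the basis \<open>z1, z2\<close>, so the matrix
  maps \<open>\<langle>(1,0)\<rangle>, \<langle>(0,1)\<rangle>, \<langle>(1,1)\<rangle>\<close> to \<open>\<langle>z1\<rangle>, \<langle>z2\<rangle>, \<langle>z3\<rangle>\<close>.\<close>
definition subline_through :: "nat \<Rightarrow> 'a::field \<times> 'a \<Rightarrow> 'a \<times> 'a \<Rightarrow> 'a \<times> 'a \<Rightarrow> ('a \<times> 'a) set set" where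
  "subline_through q z1 z2 z3 =
     (let c1 = det2 z3 z2 / det2 z1 z2; c2 = det2 z1 z3 / det2 z1 z2
      in subline_image q (c1 * fst z1) (c2 * fst z2) (c1 * snd z1) (c2 * snd z2))"

lemma subline_subline_through:
  assumes "det2 z1 z2 \<noteq> 0" "det2 z1 z3 \<noteq> 0" "det2 z2 z3 \<noteq> (0 :: 'a::field)"
  shows "subline q (subline_through q z1 z2 z3)"
proof -
  define c1 c2 where "c1 = det2 z3 z2 / det2 z1 z2" and "c2 = det2 z1 z3 / det2 z1 z2"
  have "c1 \<noteq> 0" "c2 \<noteq> 0"
    using assms by (simp_all add: c1_def c2_def det2_swap[of z3])
  moreover have "c1 * fst z1 * (c2 * snd z2) - c2 * fst z2 * (c1 * snd z1) = c1 * c2 * det2 z1 z2"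
    by (simp add: det2_def algebra_simps)
  moreover have "subline_through q z1 z2 z3 =
      subline_image q (c1 * fst z1) (c2 * fst z2) (c1 * snd z1) (c2 * snd z2)"
    by (simp add: subline_through_def c1_def c2_def)
  ultimately show ?thesis
    using assms(1) unfolding subline_iff_image
    by (intro exI[of _ "c1 * fst z1"] exI[of _ "c2 * fst z2"] exI[of _ "c1 * snd z1"]
        exI[of _ "c2 * snd z2"]) simp
qed

lemma pt1_eq_cross_ratio_combination:
  assumes d12: "det2 z1 z2 \<noteq> 0" and d13: "det2 z1 z3 \<noteq> 0" and d23: "det2 z2 z3 \<noteq> 0"
    and d1z: "det2 z1 z \<noteq> (0 :: 'a::field)"
  defines "r \<equiv> cross_ratio z1 z2 z3 z"
  shows "pt1 z = pt1 (r * det2 z3 z2 * fst z1 + det2 z1 z3 * fst z2,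
                      r * det2 z3 z2 * snd z1 + det2 z1 z3 * snd z2)"
proof -
  define a b where "a = det2 z z2 / det2 z1 z2" and "b = det2 z1 z / det2 z1 z2"
  have "b / det2 z1 z3 \<noteq> 0"
    unfolding b_def using d1z d12 d13 by simp
  have "a * det2 z1 z3 = b * det2 z3 z2 * r"
  proof -
    have swap: "det2 z3 z2 = - det2 z2 z3"
      by (rule det2_swap)
    have r_eq: "r = - (det2 z1 z3 * det2 z z2) / (det2 z2 z3 * det2 z1 z)"
      unfolding r_def cross_ratio_def by (subst (2) det2_swap) simp
    show ?thesis
      using d12 d13 d23 d1z unfolding a_def b_def swap r_eq by (simp add: field_simps)
  qed
  then have "b / det2 z1 z3 * (r * det2 z3 z2 * x + det2 z1 z3 * y) = a * x + b * y" for x y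
    using d13 by (simp add: field_simps)
  then have "z = (b / det2 z1 z3 * (r * det2 z3 z2 * fst z1 + det2 z1 z3 * fst z2),
                  b / det2 z1 z3 * (r * det2 z3 z2 * snd z1 + det2 z1 z3 * snd z2))"
    using pair_Cramer[OF d12, of z] by (simp flip: a_def b_def)
  then show ?thesis
    using pt1_scale[OF \<open>b / det2 z1 z3 \<noteq> 0\<close>] by simp
qed

text \<open>If \<open>\<langle>z\<rangle> = \<langle>z1\<rangle>\<close>, the denominator of the cross ratio vanishes, so by \<open>x / 0 = 0\<close>
  the last hypothesis holds trivially; this point is the image of \<open>\<langle>(1, 0)\<rangle>\<close>.\<close>
lemma pt1_in_subline_through:
  assumes d12: "det2 z1 z2 \<noteq> 0" and d13: "det2 z1 z3 \<noteq> 0" and d23: "det2 z2 z3 \<noteq> 0"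
    and z: "z \<noteq> (0, 0 :: 'a::field)" and cr: "cross_ratio z1 z2 z3 z \<in> Fq q" and "0 < q"
  shows "pt1 z \<in> subline_through q z1 z2 z3"
proof -
  define c1 c2 where "c1 = det2 z3 z2 / det2 z1 z2" and "c2 = det2 z1 z3 / det2 z1 z2"
  define M where "M x y = (c1 * fst z1 * x + c2 * fst z2 * y, c1 * snd z1 * x + c2 * snd z2 * y)" for x y
  have c: "c1 \<noteq> 0" "c2 \<noteq> 0"
    using assms by (simp_all add: c1_def c2_def det2_swap[of z3])
  have "subline_through q z1 z2 z3 = {pt1 (M x y) | x y. pt1 (x, y) \<in> PG1_q q \<and> (x, y) \<noteq> (0, 0)}"
    by (simp add: subline_through_def subline_image_def M_def c1_def c2_def Let_def)
  moreover have "\<exists>x y. x \<in> Fq q \<and> y \<in> Fq q \<and> (x, y) \<noteq> (0, 0) \<and> pt1 z = pt1 (M x y)"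
  proof (cases "det2 z1 z = 0")
    case True
    have "det2 z z1 = 0"
      using True by (simp add: det2_swap[of z])
    moreover have "z1 \<noteq> (0, 0)"
      using d12 by (auto simp: det2_def)
    ultimately obtain m where m: "z = (m * fst z1, m * snd z1)"
      by (rule det2_eq_0_imp_scalar)
    with z c have "m / c1 \<noteq> 0"
      by auto
    have "pt1 z = pt1 ((m / c1) * (c1 * fst z1), (m / c1) * (c1 * snd z1))"
      using c by (simp add: m)
    also have "\<dots> = pt1 (M 1 0)"
      by (simp only: pt1_scale[OF \<open>m / c1 \<noteq> 0\<close>]) (simp add: M_def)
    finally show ?thesis
      using \<open>0 < q\<close> by (intro exI[of _ 1] exI[of _ 0]) (simp add: Fq_def)
  next
    case False
    define r where "r = cross_ratio z1 z2 z3 z"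
    define v where "v = (r * det2 z3 z2 * fst z1 + det2 z1 z3 * fst z2,
                         r * det2 z3 z2 * snd z1 + det2 z1 z3 * snd z2)"
    have "pt1 z = pt1 v"
      unfolding v_def r_def using d12 d13 d23 False by (rule pt1_eq_cross_ratio_combination)
    also have "\<dots> = pt1 (1 / det2 z1 z2 * fst v, 1 / det2 z1 z2 * snd v)"
      using pt1_scale[of "1 / det2 z1 z2" "fst v" "snd v"] d12 by simp
    also have "\<dots> = pt1 (M r 1)"
      by (simp add: v_def M_def c1_def c2_def algebra_simps)
    finally show ?thesis
      using cr by (intro exI[of _ r] exI[of _ 1]) (simp add: r_def)
  qed
  ultimately show ?thesis
    using pt1_in_PG1_q by blast
qed

section \<open>Twisted cubics\<close>

definition cubic_point ::
  "(nat \<Rightarrow> 'a::comm_ring_1) \<Rightarrow> (nat \<Rightarrow> 'a) \<Rightarrow> (nat \<Rightarrow> 'a) \<Rightarrow> (nat \<Rightarrow> 'a) \<Rightarrow> 'a \<Rightarrow> 'a \<Rightarrow> nat \<Rightarrow> 'a"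
  where "cubic_point e0 e1 e2 e3 s t = (\<lambda>i. s^3 * e0 i + s^2 * t * e1 i + s * t^2 * e2 i + t^3 * e3 i)"

definition Fq_independent ::
  "nat \<Rightarrow> (nat \<Rightarrow> 'a::field) \<Rightarrow> (nat \<Rightarrow> 'a) \<Rightarrow> (nat \<Rightarrow> 'a) \<Rightarrow> (nat \<Rightarrow> 'a) \<Rightarrow> bool"
  where "Fq_independent q e0 e1 e2 e3 \<longleftrightarrow> (\<forall>c0 c1 c2 c3.
    c0 \<in> Fq q \<and> c1 \<in> Fq q \<and> c2 \<in> Fq q \<and> c3 \<in> Fq q \<and>
    (\<forall>i. c0 * e0 i + c1 * e1 i + c2 * e2 i + c3 * e3 i = 0) \<longrightarrow> c0 = 0 \<and> c1 = 0 \<and> c2 = 0 \<and> c3 = 0)"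

lemma cubic_point_scale:
  "cubic_point e0 e1 e2 e3 (c * s) (c * t) = (\<lambda>i. c ^ 3 * cubic_point e0 e1 e2 e3 s t i)"
  unfolding cubic_point_def by (simp add: power_mult_distrib power2_eq_square power3_eq_cube algebra_simps)

text \<open>The third divided difference of the cubic \<open>x \<mapsto> cubic_point e0 e1 e2 e3 1 x\<close> at the
  nodes \<open>0, 1, t, u\<close> is its leading coefficient \<open>cubic_point e0 e1 e2 e3 0 1\<close>.\<close>
lemma cubic_point_five_point_relation:
  "(- ((t - 1) * (u - 1) * (t - u))) * cubic_point e0 e1 e2 e3 1 0 k
   + (- (t * u * (t - 1) * (u - 1) * (t - u))) * cubic_point e0 e1 e2 e3 0 1 k
   + (t * u * (t - u)) * cubic_point e0 e1 e2 e3 1 1 k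
   + (u * (u - 1)) * cubic_point e0 e1 e2 e3 1 t k
   + (- (t * (t - 1))) * cubic_point e0 e1 e2 e3 1 u k = 0"
  unfolding cubic_point_def by (simp add: algebra_simps power2_eq_square power3_eq_cube)

section \<open>The tensor embedding of PG(1, q^3) onto O_1\<close>

definition frob_norm :: "nat \<Rightarrow> 'a::field \<Rightarrow> 'a" where
  "frob_norm q x = x * x ^ q * (x ^ q) ^ q"

definition pair_coord :: "'a \<times> 'a \<Rightarrow> nat \<Rightarrow> 'a" where
  "pair_coord z i = (if i = 0 then fst z else snd z)"

text \<open>The tensor \<open>z \<otimes> z\<^sup>q \<otimes> z\<^sup>q\<^sup>2\<close>, written in the coordinates of \<open>U\<^sub>1\<close>
  (see \<open>tensor_vec_nth\<close>).\<close>
definition tensor_vec :: "nat \<Rightarrow> 'a::field \<times> 'a \<Rightarrow> nat \<Rightarrow> 'a" where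
  "tensor_vec q = (\<lambda>(x, y). vecU q (x * x ^ q * (x ^ q) ^ q) (y * x ^ q * (x ^ q) ^ q)
                                   (x * y ^ q * (y ^ q) ^ q) (y * y ^ q * (y ^ q) ^ q))"

lemma tensor_vec_beyond: "8 \<le> k \<Longrightarrow> tensor_vec q z k = 0"
  by (simp add: tensor_vec_def vecU_def case_prod_beta)

definition tensor_form :: "nat \<Rightarrow> 'a::field \<times> 'a \<Rightarrow> 'a \<times> 'a \<Rightarrow> 'a \<times> 'a \<Rightarrow> 'a \<times> 'a \<Rightarrow> 'a" where
  "tensor_form q u v w z = det2 u z * det2 v z ^ q * (det2 w z ^ q) ^ q"

context
  fixes q :: nat
  assumes frob_add: "\<And>x y :: 'a::field. (x + y) ^ q = x ^ q + y ^ q"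
    and frob_cube: "\<And>x :: 'a. ((x ^ q) ^ q) ^ q = x"
begin

lemma frob_pos: "0 < q"
  using frob_cube[of 0] by (cases q) auto

lemma frob_zero [simp]: "(0 :: 'a) ^ q = 0"
  using frob_pos by simp

lemma frob_diff: "(x - y :: 'a) ^ q = x ^ q - y ^ q"
  using frob_add[of "x - y" y] by simp

lemma frob_minus: "(- x :: 'a) ^ q = - (x ^ q)"
  using frob_diff[of 0 x] by simp

lemma Fq_0 [simp]: "(0 :: 'a) \<in> Fq q"
  by (simp add: Fq_def)

lemma Fq_diff: "x \<in> Fq q \<Longrightarrow> y \<in> Fq q \<Longrightarrow> (x - y :: 'a) \<in> Fq q"
  by (simp add: Fq_def frob_diff)

lemma frob_norm_in_Fq: "frob_norm q (x :: 'a) \<in> Fq q"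
  by (simp add: Fq_def frob_norm_def power_mult_distrib frob_cube mult_ac)

lemma frob_norm_eq_0_iff [simp]: "frob_norm q (x :: 'a) = 0 \<longleftrightarrow> x = 0"
  using frob_pos by (simp add: frob_norm_def)

lemma tensor_vec_nth:
  fixes z :: "'a \<times> 'a"
  assumes "k < 8"
  shows "tensor_vec q z k =
    pair_coord z (k div 4) * pair_coord z (k div 2 mod 2) ^ q * (pair_coord z (k mod 2) ^ q) ^ q"
proof -
  consider "k = 0" | "k = 1" | "k = 2" | "k = 3" | "k = 4" | "k = 5" | "k = 6" | "k = 7"
    using assms by linarith
  then show ?thesis
    by cases (simp_all add: tensor_vec_def vecU_def pair_coord_def case_prod_beta power2_eq_square
        power_mult power_mult_distrib frob_cube mult_ac)
qed

lemma tensor_vec_scale: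
  fixes m x y :: 'a
  shows "tensor_vec q (m * x, m * y) = (\<lambda>k. frob_norm q m * tensor_vec q (x, y) k)"
proof
  fix k :: nat
  show "tensor_vec q (m * x, m * y) k = frob_norm q m * tensor_vec q (x, y) k"
    by (cases "k < 8")
      (simp_all add: tensor_vec_nth tensor_vec_beyond pair_coord_def frob_norm_def
        power_mult_distrib mult_ac)
qed

lemma pt_tensor_vec_scale:
  fixes m x y :: 'a
  assumes "m \<noteq> 0"
  shows "pt q (tensor_vec q (m * x, m * y)) = pt q (tensor_vec q (x, y))"
  using assms pt_scale[OF frob_norm_in_Fq, of m "tensor_vec q (x, y)"] by (simp add: tensor_vec_scale)

lemma Ppt_eq_tensor_vec:
  fixes u :: 'a
  shows "Ppt q 1 u (u ^ (q\<^sup>2 + q)) (u ^ (q\<^sup>2 + q + 1)) = pt q (tensor_vec q (1, u))"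
    and "Ppt q 0 0 0 1 = pt q (tensor_vec q (0 :: 'a, 1))"
  by (simp_all add: Ppt_def tensor_vec_def power_add power2_eq_square power_mult mult_ac)

lemma tensor_vec_normalize:
  assumes "z \<noteq> (0, 0 :: 'a)"
  obtains w where "w = (0, 1) \<or> fst w = 1" "pt1 z = pt1 w"
    "pt q (tensor_vec q z) = pt q (tensor_vec q w)"
proof -
  obtain m w where m: "m \<noteq> 0" and "w = (0, 1) \<or> fst w = 1" and z: "z = (m * fst w, m * snd w)"
    using assms by (rule pair_normalize)
  moreover have "pt1 z = pt1 w"
    using pt1_scale[OF m, of "fst w" "snd w"] z by simp
  moreover have "pt q (tensor_vec q z) = pt q (tensor_vec q w)"
    using pt_tensor_vec_scale[OF m, of "fst w" "snd w"] z by simp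
  ultimately show thesis
    using that by blast
qed

lemma theta_pt1_normalized:
  assumes "w = (0, 1) \<or> fst w = (1 :: 'a)"
  shows "theta q (pt1 w) = pt q (tensor_vec q w)"
  using assms
proof
  assume "fst w = 1"
  then have "w = (1, snd w)"
    by (simp add: prod_eq_iff)
  then show ?thesis
    using theta_pt1_1[of q "snd w"] Ppt_eq_tensor_vec(1)[of "snd w"] by simp
qed (simp add: theta_pt1_01 Ppt_eq_tensor_vec)

lemma theta_pt1:
  assumes "z \<noteq> (0, 0 :: 'a)"
  shows "theta q (pt1 z) = pt q (tensor_vec q z)"
proof -
  obtain w where "w = (0, 1) \<or> fst w = 1" and "pt1 z = pt1 w"
    and "pt q (tensor_vec q z) = pt q (tensor_vec q w)"
    using assms by (rule tensor_vec_normalize)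
  then show ?thesis
    by (simp add: theta_pt1_normalized)
qed

lemma O1_tensor_rep:
  assumes "X \<in> O1 q"
  obtains z :: "'a \<times> 'a" where "z \<noteq> (0, 0)" "X = pt q (tensor_vec q z)"
proof -
  from assms consider t where "X = pt q (tensor_vec q (1, t))" | "X = pt q (tensor_vec q (0 :: 'a, 1))"
    unfolding O1_def Ppt_eq_tensor_vec by blast
  then show thesis
    by cases (rule that; simp)+
qed

lemma tensor_form_linear:
  fixes u v w :: "'a \<times> 'a"
  shows "\<exists>c. \<forall>z. tensor_form q u v w z = (\<Sum>k<8. c k * tensor_vec q z k)"
proof -
  define s where "s p i = (if i = (0 :: nat) then - snd p else fst p)" for p :: "'a \<times> 'a" and i
  \<comment> \<open>\<open>det2 p z = s p 0 * fst z + s p 1 * snd z\<close>\<close>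
  define c where "c k = s u (k div 4) * s v (k div 2 mod 2) ^ q * (s w (k mod 2) ^ q) ^ q" for k
  have "tensor_form q u v w z = (\<Sum>k<8. c k * tensor_vec q z k)" for z
    by (simp add: lessThan_nat_numeral tensor_vec_nth c_def s_def pair_coord_def tensor_form_def
        det2_def frob_diff frob_minus algebra_simps)
  then show ?thesis
    by blast
qed

lemma tensor_form_relation:
  fixes u v w :: "'a \<times> 'a"
  assumes "\<And>k. (\<Sum>(l, z)\<leftarrow>ps. l * tensor_vec q z k) = 0"
  shows "(\<Sum>(l, z)\<leftarrow>ps. l * tensor_form q u v w z) = 0"
proof -
  obtain c where c: "\<And>z. tensor_form q u v w z = (\<Sum>k<8. c k * tensor_vec q z k)"
    using tensor_form_linear by blast
  have "(\<Sum>(l, z)\<leftarrow>ps. l * tensor_form q u v w z) =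
      (\<Sum>k<8. c k * (\<Sum>(l, z)\<leftarrow>ps. l * tensor_vec q z k))"
    by (induction ps) (auto simp: c sum_distrib_left distrib_left sum.distrib mult.left_commute)
  with assms show ?thesis
    by simp
qed

lemma cross_ratio_in_Fq_if_dependent:
  fixes z1 z2 z3 z4 z5 :: "'a \<times> 'a"
  assumes rel: "\<And>k. l1 * tensor_vec q z1 k + l2 * tensor_vec q z2 k + l3 * tensor_vec q z3 k
      + l4 * tensor_vec q z4 k + l5 * tensor_vec q z5 k = 0"
    and "l3 \<noteq> 0" and "det2 z5 z3 \<noteq> 0" and "det2 z2 z3 \<noteq> 0" and "det2 z1 z4 \<noteq> 0"
  shows "cross_ratio z1 z2 z3 z4 \<in> Fq q"
proof -
  let ?ps = "[(l1, z1), (l2, z2), (l3, z3), (l4, z4), (l5, z5)]"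
  have "(\<Sum>(l, z)\<leftarrow>?ps. l * tensor_vec q z k) = 0" for k
    using rel[of k] by (simp add: add.assoc)
  \<comment> \<open>Both forms below vanish at \<open>z1\<close>, \<open>z2\<close> and \<open>z5\<close>.\<close>
  then have "(\<Sum>(l, z)\<leftarrow>?ps. l * tensor_form q z1 z2 z5 z) = 0"
    and "(\<Sum>(l, z)\<leftarrow>?ps. l * tensor_form q z2 z1 z5 z) = 0"
    by (simp_all only: tensor_form_relation)
  then have E1: "l3 * tensor_form q z1 z2 z5 z3 + l4 * tensor_form q z1 z2 z5 z4 = 0"
    and E2: "l3 * tensor_form q z2 z1 z5 z3 + l4 * tensor_form q z2 z1 z5 z4 = 0"
    by (simp_all add: tensor_form_def)
  define A B where "A = det2 z1 z3 * det2 z2 z4" and "B = det2 z2 z3 * det2 z1 z4"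
  have "l3 * (det2 z5 z3 ^ q) ^ q * (A * B ^ q - B * A ^ q) =
      (l3 * tensor_form q z1 z2 z5 z3 + l4 * tensor_form q z1 z2 z5 z4) * (det2 z2 z4 * det2 z1 z4 ^ q)
    - (l3 * tensor_form q z2 z1 z5 z3 + l4 * tensor_form q z2 z1 z5 z4) * (det2 z1 z4 * det2 z2 z4 ^ q)"
    unfolding tensor_form_def A_def B_def by (simp add: algebra_simps)
  with E1 E2 assms have "A * B ^ q = B * A ^ q"
    by simp
  moreover have "B \<noteq> 0"
    using assms by (simp add: B_def)
  ultimately have "(A / B) ^ q = A / B"
    by (simp add: field_simps)
  then show ?thesis
    by (simp add: Fq_def cross_ratio_def A_def B_def)
qed

section \<open>Twisted cubics contained in O_1\<close>

context
  fixes e0 e1 e2 e3 :: "nat \<Rightarrow> 'a"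
  assumes independent: "Fq_independent q e0 e1 e2 e3"
begin

abbreviation cubic :: "'a \<Rightarrow> 'a \<Rightarrow> nat \<Rightarrow> 'a" where
  "cubic \<equiv> cubic_point e0 e1 e2 e3"

lemma cubic_proportional:
  assumes "s \<in> Fq q" "t \<in> Fq q" "s' \<in> Fq q" "t' \<in> Fq q" "l \<in> Fq q"
    and "cubic s t = (\<lambda>i. l * cubic s' t' i)"
  shows "s * t' = s' * t"
proof -
  have "\<forall>i. (s^3 - l * s'^3) * e0 i + (s^2 * t - l * (s'^2 * t')) * e1 i
      + (s * t^2 - l * (s' * t'^2)) * e2 i + (t^3 - l * t'^3) * e3 i = 0"
    using assms(6) by (simp add: cubic_point_def fun_eq_iff algebra_simps)
  moreover have "s^3 - l * s'^3 \<in> Fq q" "s^2 * t - l * (s'^2 * t') \<in> Fq q"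
    "s * t^2 - l * (s' * t'^2) \<in> Fq q" "t^3 - l * t'^3 \<in> Fq q"
    using assms(1-5) by (simp_all add: Fq_diff Fq_mult Fq_power)
  ultimately have "s^3 - l * s'^3 = 0 \<and> s^2 * t - l * (s'^2 * t') = 0 \<and>
      s * t^2 - l * (s' * t'^2) = 0 \<and> t^3 - l * t'^3 = 0"
    using independent unfolding Fq_independent_def by blast
  then have h: "s^3 = l * s'^3" "s^2 * t = l * (s'^2 * t')" "s * t^2 = l * (s' * t'^2)"
    "t^3 = l * t'^3"
    by simp_all
  have "(s * t' - s' * t)^3 =
      s^3 * t'^3 - 3 * (s^2 * t) * (s' * t'^2) + 3 * (s * t^2) * (s'^2 * t') - t^3 * s'^3"
    by (simp add: power3_eq_cube power2_eq_square algebra_simps)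
  also have "\<dots> = 0"
    unfolding h by (simp add: power3_eq_cube power2_eq_square algebra_simps)
  finally show ?thesis
    by simp
qed

lemma cubic_lift:
  assumes "pt q (cubic s t) \<in> O1 q" "s \<in> Fq q" "t \<in> Fq q" "(s, t) \<noteq> (0, 0)"
  obtains z l where "z \<noteq> (0, 0)" "l \<in> Fq q" "l \<noteq> 0" "cubic s t = (\<lambda>i. l * tensor_vec q z i)"
proof -
  obtain z where z: "z \<noteq> (0, 0)" "pt q (cubic s t) = pt q (tensor_vec q z)"
    using assms(1) by (rule O1_tensor_rep)
  then obtain l where l: "l \<in> Fq q" "cubic s t = (\<lambda>i. l * tensor_vec q z i)"
    using pt_eqD by blast
  have "l \<noteq> 0"
  proof
    assume "l = 0"
    then have "s * 0 = 1 * t" "s * 1 = 0 * t"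
      using l assms(2,3) cubic_proportional[of s t 1 0 0] cubic_proportional[of s t 0 1 0] by simp_all
    with assms(4) show False
      by simp
  qed
  with z l show thesis
    by (intro that)
qed

lemma cubic_point_set_eq_image:
  "{pt q (cubic s t) | s t. s \<in> Fq q \<and> t \<in> Fq q \<and> (s, t) \<noteq> (0, 0)} =
    (\<lambda>(s, t). pt q (cubic s t)) ` PG1_reps q"
proof (intro equalityI subsetI)
  fix X
  assume "X \<in> {pt q (cubic s t) | s t. s \<in> Fq q \<and> t \<in> Fq q \<and> (s, t) \<noteq> (0, 0)}"
  then obtain s t where X: "X = pt q (cubic s t)" and st: "s \<in> Fq q" "t \<in> Fq q" "(s, t) \<noteq> (0, 0)"
    by blast
  show "X \<in> (\<lambda>(s, t). pt q (cubic s t)) ` PG1_reps q"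
  proof (cases "s = 0")
    case True
    with st have "X = pt q (\<lambda>i. t ^ 3 * cubic 0 1 i)"
      using cubic_point_scale[of e0 e1 e2 e3 t 0 1] X by simp
    with st True have "X = pt q (cubic 0 1)"
      by (simp add: pt_scale Fq_power)
    moreover have "(0, 1) \<in> PG1_reps q"
      by (simp add: PG1_reps_def)
    ultimately show ?thesis
      by (intro image_eqI[of _ _ "(0, 1)"]) simp_all
  next
    case False
    then have "X = pt q (\<lambda>i. s ^ 3 * cubic 1 (t / s) i)"
      using cubic_point_scale[of e0 e1 e2 e3 s 1 "t / s"] X by simp
    with st False have "X = pt q (cubic 1 (t / s))"
      by (simp add: pt_scale Fq_power)
    moreover have "(1, t / s) \<in> PG1_reps q"
      using st by (simp add: PG1_reps_def Fq_divide)
    ultimately show ?thesis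
      by (intro image_eqI[of _ _ "(1, t / s)"]) simp_all
  qed
next
  fix X
  assume "X \<in> (\<lambda>(s, t). pt q (cubic s t)) ` PG1_reps q"
  then obtain v where "v \<in> PG1_reps q" and X: "X = pt q (cubic (fst v) (snd v))"
    by (auto simp: case_prod_beta)
  then have "fst v \<in> Fq q" "snd v \<in> Fq q" "(fst v, snd v) \<noteq> (0, 0)"
    by (auto simp: PG1_reps_def)
  with X show "X \<in> {pt q (cubic s t) | s t. s \<in> Fq q \<and> t \<in> Fq q \<and> (s, t) \<noteq> (0, 0)}"
    by blast
qed

lemma inj_on_cubic_PG1_reps: "inj_on (\<lambda>(s, t). pt q (cubic s t)) (PG1_reps q)"
proof (rule inj_onI)
  fix v w
  assume v: "v \<in> PG1_reps q" and w: "w \<in> PG1_reps q"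
    and "(\<lambda>(s, t). pt q (cubic s t)) v = (\<lambda>(s, t). pt q (cubic s t)) w"
  then have "pt q (cubic (fst v) (snd v)) = pt q (cubic (fst w) (snd w))"
    by (simp add: case_prod_beta)
  then obtain l where "l \<in> Fq q" "cubic (fst v) (snd v) = (\<lambda>i. l * cubic (fst w) (snd w) i)"
    using pt_eqD by blast
  moreover have "fst v \<in> Fq q" "snd v \<in> Fq q" "fst w \<in> Fq q" "snd w \<in> Fq q"
    using v w by (auto simp: PG1_reps_def)
  ultimately have "fst v * snd w = fst w * snd v"
    by (intro cubic_proportional)
  with v w show "v = w"
    by (auto simp: PG1_reps_def)
qed

context
  fixes z :: "'a \<Rightarrow> 'a \<Rightarrow> 'a \<times> 'a" and lam :: "'a \<Rightarrow> 'a \<Rightarrow> 'a"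
  assumes lift: "\<And>s t. s \<in> Fq q \<Longrightarrow> t \<in> Fq q \<Longrightarrow> (s, t) \<noteq> (0, 0) \<Longrightarrow>
      z s t \<noteq> (0, 0) \<and> lam s t \<in> Fq q \<and> lam s t \<noteq> 0 \<and>
      cubic s t = (\<lambda>i. lam s t * tensor_vec q (z s t) i)"
begin

lemma det2_lift_ne_0:
  assumes st: "s \<in> Fq q" "t \<in> Fq q" "(s, t) \<noteq> (0, 0)"
    and st': "s' \<in> Fq q" "t' \<in> Fq q" "(s', t') \<noteq> (0, 0)"
    and "s * t' \<noteq> s' * t"
  shows "det2 (z s t) (z s' t') \<noteq> 0"
proof
  assume "det2 (z s t) (z s' t') = 0"
  then obtain m where m: "z s t = (m * fst (z s' t'), m * snd (z s' t'))"
    using lift[OF st'] by (blast elim: det2_eq_0_imp_scalar)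
  define l where "l = lam s t * frob_norm q m / lam s' t'"
  have "cubic s t = (\<lambda>i. l * cubic s' t' i)"
    using lift[OF st] lift[OF st'] tensor_vec_scale[of m "fst (z s' t')" "snd (z s' t')"]
    by (simp add: m l_def)
  moreover have "l \<in> Fq q"
    using lift[OF st] lift[OF st'] by (simp add: l_def Fq_mult Fq_divide frob_norm_in_Fq)
  ultimately have "s * t' = s' * t"
    using st st' by (intro cubic_proportional)
  with assms(7) show False
    by simp
qed

lemma cross_ratio_lift_in_Fq:
  assumes "4 \<le> card (Fq q :: 'a set)" and t: "t \<in> Fq q"
  shows "cross_ratio (z 1 0) (z 0 1) (z 1 1) (z 1 t) \<in> Fq q"
proof -
  have d23: "det2 (z 0 1) (z 1 1) \<noteq> 0" and d13: "det2 (z 1 0) (z 1 1) \<noteq> 0"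
    by (simp_all add: det2_lift_ne_0)
  consider "t = 0" | "t = 1" | "t \<noteq> 0" "t \<noteq> 1"
    by blast
  then show ?thesis
  proof cases
    case 1
    \<comment> \<open>\<open>z 1 t = z 1 0\<close>, so the denominator vanishes and the division yields 0\<close>
    then show ?thesis
      by (simp add: cross_ratio_def)
  next
    case 2
    then show ?thesis
      using d23 d13 by (simp add: cross_ratio_def)
  next
    case 3
    from assms(1) have "3 < card (Fq q :: 'a set)"
      by simp
    then obtain u where u: "u \<in> Fq q" "u \<noteq> 0" "u \<noteq> 1" "u \<noteq> t"
      by (rule card_gt_3_avoid)
    have rel: "(- ((t - 1) * (u - 1) * (t - u)) * lam 1 0) * tensor_vec q (z 1 0) k
        + (- (t * u * (t - 1) * (u - 1) * (t - u)) * lam 0 1) * tensor_vec q (z 0 1) k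
        + (t * u * (t - u) * lam 1 1) * tensor_vec q (z 1 1) k
        + (u * (u - 1) * lam 1 t) * tensor_vec q (z 1 t) k
        + (- (t * (t - 1)) * lam 1 u) * tensor_vec q (z 1 u) k = 0" for k
      using cubic_point_five_point_relation[of t u e0 e1 e2 e3 k] t u
        lift[of 1 0] lift[of 0 1] lift[of 1 1] lift[of 1 t] lift[of 1 u]
      by (simp add: mult.assoc)
    have "t * u * (t - u) * lam 1 1 \<noteq> 0"
      using 3 u lift[of 1 1] by simp
    moreover have "det2 (z 1 u) (z 1 1) \<noteq> 0" and "det2 (z 1 0) (z 1 t) \<noteq> 0"
      using 3 u t by (simp_all add: det2_lift_ne_0)
    ultimately show ?thesis
      using cross_ratio_in_Fq_if_dependent[OF rel] d23 by blast
  qed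
qed

lemma cubic_eq_theta_subline:
  assumes "4 \<le> card (Fq q :: 'a set)"
  shows "\<exists>L. subline q L \<and>
    {pt q (cubic s t) | s t. s \<in> Fq q \<and> t \<in> Fq q \<and> (s, t) \<noteq> (0, 0)} = theta q ` L"
proof -
  let ?C = "{pt q (cubic s t) | s t. s \<in> Fq q \<and> t \<in> Fq q \<and> (s, t) \<noteq> (0, 0)}"
  define L where "L = subline_through q (z 1 0) (z 0 1) (z 1 1)"
  have d: "det2 (z 1 0) (z 0 1) \<noteq> 0" "det2 (z 1 0) (z 1 1) \<noteq> 0" "det2 (z 0 1) (z 1 1) \<noteq> 0"
    by (simp_all add: det2_lift_ne_0)
  have "finite (Fq q :: 'a set)"
    using assms card.infinite by force
  then have "finite L" and card_L: "card L \<le> card (PG1_reps q :: ('a \<times> 'a) set)"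
    unfolding L_def subline_through_def Let_def subline_image_eq
    by (simp_all add: card_image_le finite_PG1_reps)
  have on_L: "pt1 (z s t) \<in> L" and on_C: "pt q (cubic s t) = theta q (pt1 (z s t))"
    if "(s, t) \<in> PG1_reps q" for s t
  proof -
    have st: "s \<in> Fq q" "t \<in> Fq q" "(s, t) \<noteq> (0, 0)"
      using that by (auto simp: PG1_reps_def)
    have "cross_ratio (z 1 0) (z 0 1) (z 1 1) (z s t) \<in> Fq q"
      using that assms cross_ratio_lift_in_Fq by (auto simp: PG1_reps_def cross_ratio_def)
    then show "pt1 (z s t) \<in> L"
      unfolding L_def using pt1_in_subline_through[OF d] lift[OF st] frob_pos by blast
    show "pt q (cubic s t) = theta q (pt1 (z s t))"
      using lift[OF st] by (simp add: theta_pt1 pt_scale)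
  qed
  have C_eq: "?C = (\<lambda>(s, t). pt q (cubic s t)) ` PG1_reps q"
    by (rule cubic_point_set_eq_image)
  then have "?C \<subseteq> theta q ` L"
    using on_L on_C by auto
  moreover have "card (theta q ` L) \<le> card ?C"
    using card_image_le[OF \<open>finite L\<close>, of "theta q"] card_L
      card_image[OF inj_on_cubic_PG1_reps] C_eq by simp
  ultimately have "?C = theta q ` L"
    using \<open>finite L\<close> by (intro card_seteq) simp_all
  moreover have "subline q L"
    unfolding L_def using d by (rule subline_subline_through)
  ultimately show ?thesis
    by blast
qed

end

lemma twisted_cubic_in_O1_is_theta_subline:
  assumes "4 \<le> card (Fq q :: 'a set)"
    and "{pt q (cubic s t) | s t. s \<in> Fq q \<and> t \<in> Fq q \<and> (s, t) \<noteq> (0, 0)} \<subseteq> O1 q"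
  shows "\<exists>L. subline q L \<and>
    {pt q (cubic s t) | s t. s \<in> Fq q \<and> t \<in> Fq q \<and> (s, t) \<noteq> (0, 0)} = theta q ` L"
proof -
  have "\<exists>zl. fst zl \<noteq> (0, 0) \<and> snd zl \<in> Fq q \<and> snd zl \<noteq> 0 \<and>
      cubic s t = (\<lambda>i. snd zl * tensor_vec q (fst zl) i)"
    if st: "s \<in> Fq q" "t \<in> Fq q" "(s, t) \<noteq> (0, 0)" for s t
  proof -
    from assms(2) st have "pt q (cubic s t) \<in> O1 q"
      by blast
    then obtain z' l where "z' \<noteq> (0, 0)" "l \<in> Fq q" "l \<noteq> 0" "cubic s t = (\<lambda>i. l * tensor_vec q z' i)"
      using st by (rule cubic_lift)
    then show ?thesis
      by (intro exI[of _ "(z', l)"]) simp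
  qed
  then obtain f where "\<And>s t. s \<in> Fq q \<Longrightarrow> t \<in> Fq q \<Longrightarrow> (s, t) \<noteq> (0, 0) \<Longrightarrow>
      fst (f s t) \<noteq> (0, 0) \<and> snd (f s t) \<in> Fq q \<and> snd (f s t) \<noteq> 0 \<and>
      cubic s t = (\<lambda>i. snd (f s t) * tensor_vec q (fst (f s t)) i)"
    by metis
  then show ?thesis
    using assms(1) by (rule cubic_eq_theta_subline[of "\<lambda>s t. fst (f s t)" "\<lambda>s t. snd (f s t)"])
qed

end

end

theorem mainTheorem4:
  fixes q :: nat and C :: "(nat \<Rightarrow> 'a::{field,finite}) set set"
  assumes "\<exists>p k. prime p \<and> k > 0 \<and> q = p ^ k"
    and "card (UNIV :: 'a set) = q ^ 3"
    and "q \<ge> 4"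
    and "twisted_cubic q C"
    and "C \<subseteq> O1 q"
  shows "\<exists>L. subline q L \<and> C = theta q ` L"
proof -
  obtain p k where p: "prime p" and q: "q = p ^ k"
    using assms(1) by blast
  then have "CHAR('a) = p"
    using CHAR_eq_of_card_prime_power[OF p, of "k * 3"] assms(2) by (simp add: power_mult)
  then have frob_add: "(x + y) ^ q = x ^ q + y ^ q" for x y :: 'a
    using p q by (intro freshmans_dream') simp_all
  have frob_cube: "((x ^ q) ^ q) ^ q = x" for x :: 'a
    using power_card_eq_self[of x] assms(2) by (metis power3_eq_cube power_mult)
  have card: "4 \<le> card (Fq q :: 'a set)"
    using card_Fq_ge[OF assms(2)] assms(3) by simp
  obtain e0 e1 e2 e3 where "Fq_independent q e0 e1 e2 e3"
    and C: "C = {pt q (cubic_point e0 e1 e2 e3 s t) | s t. s \<in> Fq q \<and> t \<in> Fq q \<and> (s, t) \<noteq> (0, 0)}"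
    using assms(4) unfolding twisted_cubic_def Fq_independent_def cubic_point_def by blast
  then show ?thesis
    using twisted_cubic_in_O1_is_theta_subline[OF frob_add frob_cube _ card] assms(5) by simp
qed

end
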